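(* For every positive integer $l'$ there is a constant $C_{l'}$ such that for all $n$, every $(n-l')$-trace $l'$-Sperner family $\mathcal{F}\subseteq 2^{[n]}$ satisfies $|\mathcal{F}|\le C_{l'}\, n^{-1/3}\binom{n}{\lfloor n/2\rfloor}$.
   Context: $[n]=\{1,\dots,n\}$. A chain of length $m$ is a sequence of sets $F_1\subsetneq\dots\subsetneq F_m$; a family is $k$-Sperner if it contains no chain of length $k+1$. For a family $\mathcal{F}$ and a set $X$, $\mathcal{F}|_X=\{F\cap X: F\in\mathcal{F}\}$. A family $\mathcal{F}\subseteq 2^{[n]}$ is $l$-trace $k$-Sperner if for every $l$-element subset $L\subseteq[n]$, the family $\mathcal{F}|_L$ is $k$-Sperner. *)

theory Defs
  imports Main "HOL-Library.Cardinality" Complex_Main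
begin

definition is_chain :: "nat set list \<Rightarrow> bool" where
  "is_chain cs \<longleftrightarrow> (\<forall>i. Suc i < length cs \<longrightarrow> cs ! i \<subset> cs ! Suc i)"

definition k_sperner :: "nat \<Rightarrow> nat set set \<Rightarrow> bool" where
  "k_sperner k F \<longleftrightarrow>
     \<not> (\<exists>cs. length cs = k + 1 \<and> is_chain cs \<and> set cs \<subseteq> F)"

definition trace :: "nat set set \<Rightarrow> nat set \<Rightarrow> nat set set" where
  "trace F X = (\<lambda>A. A \<inter> X) ` F"

definition trace_sperner :: "nat \<Rightarrow> nat \<Rightarrow> nat \<Rightarrow> nat set set \<Rightarrow> bool" where
  "trace_sperner n l k F \<longleftrightarrow>
     (\<forall>L. L \<subseteq> {1..n} \<longrightarrow> card L = l \<longrightarrow> k_sperner k (trace F L))"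

end

theory Submission
  imports Defs
begin

(*
  Call the passage from A to B an exchange step if B contains A minus at most one element x
  together with a new element w different from x. A walk of l exchange steps inside F whose
  removed elements and added witnesses are pairwise distinct becomes a chain of length l + 1 in
  the trace of F on the complement of l coordinates that contain every removed element but no
  witness; so such walks do not exist. Grading the sets of F by how long such walks survive
  against forbidden sets of at most 2l elements, every grade is a family in which each A has a
  set Z A of at most 2l elements such that no exchange step out of A avoids Z A. Counting pairs
  (A, x) with x in A - Z A through the set A - {x}, each grade satisfies
  sum (|A| - 2l) <= 2^(2l+1) 2^n. Hence the sets of F of size at least n/2, and by
  complementation all of F, number O(2^n / n) = O(n^(-1/2) binom(n, n/2)).
*)

definition exchange_step :: "nat set \<Rightarrow> nat set \<Rightarrow> nat \<Rightarrow> nat \<Rightarrow> bool" where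
  "exchange_step A B x w \<longleftrightarrow> A - B \<subseteq> {x} \<and> w \<in> B - A \<and> w \<noteq> x"

lemma card_exchange_fibre_le:
  fixes Z :: "nat set \<Rightarrow> nat set"
  assumes Z: "\<And>A. A \<in> G \<Longrightarrow> finite (Z A) \<and> card (Z A) \<le> z"
    and no_step: "\<And>A B x w. A \<in> G \<Longrightarrow> B \<in> G \<Longrightarrow> exchange_step A B x w
                    \<Longrightarrow> x \<notin> Z A \<Longrightarrow> w \<notin> Z A \<Longrightarrow> False"
  shows "card {p \<in> Sigma G (\<lambda>A. A - Z A). fst p - {snd p} = S} \<le> 2 ^ Suc z"
    (is "card ?fibre \<le> _")
proof (cases "?fibre = {}")
  case False
  then obtain A x where "(A, x) \<in> ?fibre" by auto
  then have A: "A \<in> G" and x: "x \<in> A" "x \<notin> Z A" and S: "S = A - {x}" by auto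
  have ZA: "finite (Z A)" "card (Z A) \<le> z" using Z[OF A] by auto
  \<comment> \<open>every set of the fibre contains \<open>S\<close> and, by the absence of exchange steps out of \<open>A\<close>,
      adds to \<open>A - {x}\<close> or to \<open>A\<close> only elements of \<open>Z A\<close>\<close>
  have "fst ` ?fibre \<subseteq> (\<lambda>Y. S \<union> Y) ` Pow (Z A) \<union> (\<lambda>Y. A \<union> Y) ` Pow (Z A)"
  proof
    fix B assume "B \<in> fst ` ?fibre"
    then have B: "B \<in> G" and SB: "S \<subseteq> B" by auto
    have "B - A \<subseteq> Z A"
    proof
      fix w assume w: "w \<in> B - A"
      with x S SB have "exchange_step A B x w" unfolding exchange_step_def by auto
      with no_step[OF A B] x show "w \<in> Z A" by blast
    qed
    then have "B = S \<union> (B - A) \<or> B = A \<union> (B - A)" using S SB by auto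
    then show "B \<in> (\<lambda>Y. S \<union> Y) ` Pow (Z A) \<union> (\<lambda>Y. A \<union> Y) ` Pow (Z A)"
      using \<open>B - A \<subseteq> Z A\<close> by blast
  qed
  then have "card (fst ` ?fibre) \<le> card ((\<lambda>Y. S \<union> Y) ` Pow (Z A) \<union> (\<lambda>Y. A \<union> Y) ` Pow (Z A))"
    using ZA by (intro card_mono) auto
  also have "\<dots> \<le> card ((\<lambda>Y. S \<union> Y) ` Pow (Z A)) + card ((\<lambda>Y. A \<union> Y) ` Pow (Z A))"
    by (rule card_Un_le)
  finally have fibre_le:
    "card (fst ` ?fibre) \<le> card ((\<lambda>Y. S \<union> Y) ` Pow (Z A)) + card ((\<lambda>Y. A \<union> Y) ` Pow (Z A))" .
  have "inj_on fst ?fibre"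
  proof (rule inj_onI)
    fix p q assume "p \<in> ?fibre" "q \<in> ?fibre" "fst p = fst q"
    then obtain B x y where "p = (B, x)" "q = (B, y)" by (metis prod.collapse)
    moreover from this have "x \<in> B" "B - {x} = S" "B - {y} = S"
      using \<open>p \<in> ?fibre\<close> \<open>q \<in> ?fibre\<close> by simp_all
    ultimately show "p = q" by auto
  qed
  with fibre_le have
    "card ?fibre \<le> card ((\<lambda>Y. S \<union> Y) ` Pow (Z A)) + card ((\<lambda>Y. A \<union> Y) ` Pow (Z A))"
    by (simp add: card_image)
  also have "\<dots> \<le> 2 ^ card (Z A) + 2 ^ card (Z A)"
    using ZA by (metis add_mono card_Pow card_image_le finite_Pow_iff)
  also have "\<dots> \<le> 2 ^ z + 2 ^ z" using ZA by (intro add_mono power_increasing) auto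
  finally show ?thesis by simp
qed (simp only: card.empty zero_le)

lemma sum_card_minus_le_if_no_exchange_step:
  fixes Z :: "nat set \<Rightarrow> nat set"
  assumes G: "G \<subseteq> Pow {1..n}"
    and Z: "\<And>A. A \<in> G \<Longrightarrow> finite (Z A) \<and> card (Z A) \<le> z"
    and no_step: "\<And>A B x w. A \<in> G \<Longrightarrow> B \<in> G \<Longrightarrow> exchange_step A B x w
                    \<Longrightarrow> x \<notin> Z A \<Longrightarrow> w \<notin> Z A \<Longrightarrow> False"
  shows "(\<Sum>A\<in>G. card A - z) \<le> 2 ^ Suc z * 2 ^ n"
proof -
  define pairs where "pairs = Sigma G (\<lambda>A. A - Z A)"
  have "finite G" using G by (rule finite_subset) simp
  have "(\<Sum>A\<in>G. card A - z) \<le> (\<Sum>A\<in>G. card (A - Z A))"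
  proof (rule sum_mono)
    fix A assume "A \<in> G"
    with Z have "card A - card (Z A) \<le> card (A - Z A)" by (blast intro: diff_card_le_card_Diff)
    with Z[OF \<open>A \<in> G\<close>] show "card A - z \<le> card (A - Z A)" by linarith
  qed
  also have "\<dots> = card pairs"
    unfolding pairs_def using \<open>finite G\<close> G
    by (subst card_SigmaI) (auto intro: finite_subset)
  also have "pairs = (\<Union>S\<in>Pow {1..n}. {p \<in> pairs. fst p - {snd p} = S})"
  proof (intro equalityI subsetI)
    fix p assume "p \<in> pairs"
    moreover from this have "fst p - {snd p} \<in> Pow {1..n}" using G by (force simp: pairs_def)
    ultimately show "p \<in> (\<Union>S\<in>Pow {1..n}. {p \<in> pairs. fst p - {snd p} = S})" by blast
  qed blast
  also have "card \<dots> \<le> (\<Sum>S\<in>Pow {1..n}. card {p \<in> pairs. fst p - {snd p} = S})"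
    by (rule card_UN_le) simp
  also have "\<dots> \<le> (\<Sum>S\<in>Pow {1..n}. 2 ^ Suc z)"
    unfolding pairs_def by (rule sum_mono) (rule card_exchange_fibre_le[OF Z no_step])
  finally show ?thesis by (simp add: card_Pow mult.commute)
qed

fun exchange_walk :: "nat set set \<Rightarrow> nat \<Rightarrow> nat set \<Rightarrow> nat set \<Rightarrow> bool" where
  "exchange_walk F 0 Z A = True"
| "exchange_walk F (Suc j) Z A \<longleftrightarrow>
     (\<exists>B\<in>F. \<exists>x w. exchange_step A B x w \<and> x \<notin> Z \<and> w \<notin> Z
        \<and> exchange_walk F j (insert x (insert w Z)) B)"

lemma exchange_walk_imp_list:
  assumes "A \<in> F" "exchange_walk F j Z A"
  shows "\<exists>cs Xs Ws. length cs = Suc j \<and> cs ! 0 = A \<and> set cs \<subseteq> F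
    \<and> finite Xs \<and> finite Ws \<and> card Xs \<le> j \<and> card Ws \<le> j
    \<and> Xs \<inter> Ws = {} \<and> Xs \<inter> Z = {} \<and> Ws \<inter> Z = {}
    \<and> (\<forall>i<j. cs ! i - cs ! Suc i \<subseteq> Xs \<and> (cs ! Suc i - cs ! i) \<inter> Ws \<noteq> {})"
  using assms
proof (induction j arbitrary: Z A)
  case 0
  then show ?case by (intro exI[of _ "[A]"] exI[of _ "{}"]) auto
next
  case (Suc j)
  then obtain B x w where B: "B \<in> F" "exchange_step A B x w" "x \<notin> Z" "w \<notin> Z"
    and walk: "exchange_walk F j (insert x (insert w Z)) B"
    by auto
  obtain cs Xs Ws where cs: "length cs = Suc j" "cs ! 0 = B" "set cs \<subseteq> F"
    and XW: "finite Xs" "finite Ws" "card Xs \<le> j" "card Ws \<le> j" "Xs \<inter> Ws = {}"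
      "Xs \<inter> insert x (insert w Z) = {}" "Ws \<inter> insert x (insert w Z) = {}"
    and steps: "\<forall>i<j. cs ! i - cs ! Suc i \<subseteq> Xs \<and> (cs ! Suc i - cs ! i) \<inter> Ws \<noteq> {}"
    using Suc.IH[OF B(1) walk] by (elim exE conjE) (rule that; assumption)
  have "\<forall>i<Suc j. (A # cs) ! i - (A # cs) ! Suc i \<subseteq> insert x Xs
      \<and> ((A # cs) ! Suc i - (A # cs) ! i) \<inter> insert w Ws \<noteq> {}"
  proof (intro allI impI)
    fix i assume "i < Suc j"
    show "(A # cs) ! i - (A # cs) ! Suc i \<subseteq> insert x Xs
      \<and> ((A # cs) ! Suc i - (A # cs) ! i) \<inter> insert w Ws \<noteq> {}"
    proof (cases i)
      case 0
      with B(2) cs(2) show ?thesis unfolding exchange_step_def by auto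
    next
      case (Suc i')
      with steps \<open>i < Suc j\<close> show ?thesis by auto
    qed
  qed
  moreover have "card (insert x Xs) \<le> Suc j" "card (insert w Ws) \<le> Suc j"
    using XW(1-4) by (simp_all add: card_insert_if)
  moreover have "insert x Xs \<inter> insert w Ws = {}" "insert x Xs \<inter> Z = {}" "insert w Ws \<inter> Z = {}"
    using XW(5-7) B(2-4) unfolding exchange_step_def by auto
  moreover have "length (A # cs) = Suc (Suc j)" "set (A # cs) \<subseteq> F"
    using cs Suc.prems(1) by auto
  ultimately show ?case
    using XW(1,2) by (intro exI[of _ "A # cs"] exI[of _ "insert x Xs"] exI[of _ "insert w Ws"]) simp
qed

lemma is_chain_map_Int:
  assumes "\<And>i. Suc i < length cs \<Longrightarrow>
      (cs ! i - cs ! Suc i) \<inter> L = {} \<and> (cs ! Suc i - cs ! i) \<inter> L \<noteq> {}"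
  shows "is_chain (map (\<lambda>S. S \<inter> L) cs)"
  unfolding is_chain_def using assms by auto

lemma exists_subset_card_between:
  assumes "finite U" "A \<subseteq> U" "card A \<le> k" "k \<le> card U"
  shows "\<exists>X. A \<subseteq> X \<and> X \<subseteq> U \<and> card X = k"
proof -
  have "k - card A \<le> card (U - A)"
    using assms by (simp add: card_Diff_subset finite_subset)
  then obtain T where T: "T \<subseteq> U - A" "card T = k - card A"
    by (meson obtain_subset_with_card_n)
  then have "card (A \<union> T) = k"
    using assms by (subst card_Un_disjoint) (auto intro: finite_subset)
  with T assms(2) show ?thesis by blast
qed

lemma no_long_exchange_walk:
  assumes F: "F \<subseteq> Pow {1..n}" and ts: "trace_sperner n (n - l) l F" and "2 * l \<le> n"
    and "A \<in> F"
  shows "\<not> exchange_walk F l {} A"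
proof
  assume walk: "exchange_walk F l {} A"
  obtain cs Xs Ws where cs: "length cs = Suc l" "set cs \<subseteq> F"
    and XW: "finite Xs" "finite Ws" "card Xs \<le> l" "card Ws \<le> l" "Xs \<inter> Ws = {}"
    and steps: "\<forall>i<l. cs ! i - cs ! Suc i \<subseteq> Xs \<and> (cs ! Suc i - cs ! i) \<inter> Ws \<noteq> {}"
    using exchange_walk_imp_list[OF \<open>A \<in> F\<close> walk] by (elim exE conjE) (rule that; assumption)
  have "card (Xs \<inter> {1..n}) \<le> l"
    using card_mono[OF XW(1) Int_lower1, of "{1..n}"] XW(3) by linarith
  moreover have "l \<le> card ({1..n} - Ws)"
    using XW(4) \<open>2 * l \<le> n\<close> diff_card_le_card_Diff[OF XW(2), of "{1..n}"] by simp
  moreover have "Xs \<inter> {1..n} \<subseteq> {1..n} - Ws" using XW(5) by blast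
  ultimately obtain X where X: "Xs \<inter> {1..n} \<subseteq> X" "X \<subseteq> {1..n} - Ws" "card X = l"
    using exists_subset_card_between[of "{1..n} - Ws" "Xs \<inter> {1..n}" l] by blast
  define L where "L = {1..n} - X"
  have L: "L \<subseteq> {1..n}" "card L = n - l"
  proof -
    have "X \<subseteq> {1..n}" using X(2) by blast
    then show "L \<subseteq> {1..n}" "card L = n - l"
      unfolding L_def using X(3) by (auto simp: card_Diff_subset finite_subset)
  qed
  have "is_chain (map (\<lambda>S. S \<inter> L) cs)"
  proof (rule is_chain_map_Int)
    fix i assume i: "Suc i < length cs"
    then have "cs ! i - cs ! Suc i \<subseteq> Xs" "(cs ! Suc i - cs ! i) \<inter> Ws \<noteq> {}"
      using steps cs(1) by auto
    moreover have "cs ! Suc i \<subseteq> {1..n}" using i cs F by (meson PowD nth_mem subsetD)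
    ultimately show "(cs ! i - cs ! Suc i) \<inter> L = {} \<and> (cs ! Suc i - cs ! i) \<inter> L \<noteq> {}"
      using X unfolding L_def by blast
  qed
  moreover have "set (map (\<lambda>S. S \<inter> L) cs) \<subseteq> trace F L"
    using cs(2) unfolding trace_def by auto
  ultimately have "\<not> k_sperner l (trace F L)"
    using cs(1) unfolding k_sperner_def by (metis Suc_eq_plus1 length_map)
  with ts L show False unfolding trace_sperner_def by blast
qed

definition robust_walk :: "nat set set \<Rightarrow> nat \<Rightarrow> nat \<Rightarrow> nat set \<Rightarrow> bool" where
  "robust_walk F l j A \<longleftrightarrow> (\<forall>Z. finite Z \<longrightarrow> card Z \<le> 2 * (l - j) \<longrightarrow> exchange_walk F j Z A)"

lemma ex_threshold_nat:
  fixes P :: "nat \<Rightarrow> bool"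
  assumes "P 0" "\<not> P n"
  shows "\<exists>k<n. P k \<and> \<not> P (Suc k)"
  using assms by (induction n) (simp, metis less_Suc_eq)

lemma sum_card_minus_le_on_robustness_layer:
  assumes F: "F \<subseteq> Pow {1..n}" and "G \<subseteq> F" and "j < l"
    and layer: "\<And>A. A \<in> G \<Longrightarrow> robust_walk F l j A \<and> \<not> robust_walk F l (Suc j) A"
  shows "(\<Sum>A\<in>G. card A - 2 * l) \<le> 2 ^ Suc (2 * l) * 2 ^ n"
proof -
  define Z where
    "Z A = (SOME Z. finite Z \<and> card Z \<le> 2 * (l - Suc j) \<and> \<not> exchange_walk F (Suc j) Z A)" for A
  have Z_spec: "finite (Z A) \<and> card (Z A) \<le> 2 * (l - Suc j) \<and> \<not> exchange_walk F (Suc j) (Z A) A"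
    if "A \<in> G" for A
  proof -
    have "\<exists>Z. finite Z \<and> card Z \<le> 2 * (l - Suc j) \<and> \<not> exchange_walk F (Suc j) Z A"
      using layer[OF that] unfolding robust_walk_def by blast
    then show ?thesis unfolding Z_def by (rule someI_ex)
  qed
  have Z_fin: "finite (Z A)" and Z_card: "card (Z A) \<le> 2 * (l - Suc j)"
    and Z_walk: "\<not> exchange_walk F (Suc j) (Z A) A" if "A \<in> G" for A
    using Z_spec[OF that] by blast+
  show ?thesis
  proof (rule sum_card_minus_le_if_no_exchange_step[where Z = Z])
    show "G \<subseteq> Pow {1..n}" using F \<open>G \<subseteq> F\<close> by blast
    show "finite (Z A) \<and> card (Z A) \<le> 2 * l" if "A \<in> G" for A
      using Z_fin[OF that] Z_card[OF that] by simp
  next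
    fix A B x w
    assume A: "A \<in> G" and B: "B \<in> G" and step: "exchange_step A B x w" "x \<notin> Z A" "w \<notin> Z A"
    have "card (insert x (insert w (Z A))) \<le> card (Z A) + 2"
      using Z_fin[OF A] by (simp add: card_insert_if)
    also have "\<dots> \<le> 2 * (l - j)" using Z_card[OF A] \<open>j < l\<close> by simp
    finally have "exchange_walk F j (insert x (insert w (Z A))) B"
      using layer[OF B] Z_fin[OF A] by (simp add: robust_walk_def)
    then have "exchange_walk F (Suc j) (Z A) A"
      unfolding exchange_walk.simps using step B \<open>G \<subseteq> F\<close> by blast
    with Z_walk[OF A] show False by contradiction
  qed
qed

lemma sum_card_minus_le:
  assumes F: "F \<subseteq> Pow {1..n}" and ts: "trace_sperner n (n - l) l F" and "2 * l \<le> n"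
  shows "(\<Sum>A\<in>F. card A - 2 * l) \<le> l * 2 ^ Suc (2 * l) * 2 ^ n"
proof -
  have "\<exists>j<l. robust_walk F l j A \<and> \<not> robust_walk F l (Suc j) A" if "A \<in> F" for A
  proof -
    have "robust_walk F l 0 A" by (simp add: robust_walk_def)
    moreover have "\<not> robust_walk F l l A"
      using no_long_exchange_walk[OF F ts \<open>2 * l \<le> n\<close> that] by (auto simp: robust_walk_def)
    ultimately show ?thesis by (rule ex_threshold_nat)
  qed
  then obtain rank where rank: "\<And>A. A \<in> F \<Longrightarrow> rank A < l \<and> robust_walk F l (rank A) A
      \<and> \<not> robust_walk F l (Suc (rank A)) A"
    by metis
  have "finite F" using F by (rule finite_subset) simp
  then have "(\<Sum>A\<in>F. card A - 2 * l) = (\<Sum>j<l. \<Sum>A\<in>{A\<in>F. rank A = j}. card A - 2 * l)"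
    using rank by (intro sum.group[symmetric]) auto
  also have "\<dots> \<le> (\<Sum>j<l. 2 ^ Suc (2 * l) * 2 ^ n)"
    using rank by (intro sum_mono sum_card_minus_le_on_robustness_layer[OF F]) auto
  finally show ?thesis by simp
qed

lemma is_chain_rev_map_Diff:
  assumes "is_chain cs" "set cs \<subseteq> Pow L"
  shows "is_chain (rev (map (\<lambda>T. L - T) cs))"
  unfolding is_chain_def
proof (intro allI impI)
  fix i assume i: "Suc i < length (rev (map (\<lambda>T. L - T) cs))"
  define a where "a = length cs - Suc (Suc i)"
  have a: "Suc a < length cs" "length cs - Suc i = Suc a" using i unfolding a_def by auto
  have "cs ! a \<subset> cs ! Suc a" using assms(1) a(1) unfolding is_chain_def by blast
  moreover have "cs ! Suc a \<subseteq> L" using assms(2) nth_mem[OF a(1)] by blast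
  ultimately
  show "rev (map (\<lambda>T. L - T) cs) ! i \<subset> rev (map (\<lambda>T. L - T) cs) ! Suc i"
    using i a by (auto simp: rev_nth a_def)
qed

lemma k_sperner_image_Diff:
  assumes "F \<subseteq> Pow L" "k_sperner k F"
  shows "k_sperner k ((\<lambda>T. L - T) ` F)"
  unfolding k_sperner_def
proof
  assume "\<exists>cs. length cs = k + 1 \<and> is_chain cs \<and> set cs \<subseteq> (\<lambda>T. L - T) ` F"
  then obtain cs where cs: "length cs = k + 1" "is_chain cs" "set cs \<subseteq> (\<lambda>T. L - T) ` F"
    by blast
  have "set (rev (map (\<lambda>T. L - T) cs)) \<subseteq> F"
  proof
    fix S assume "S \<in> set (rev (map (\<lambda>T. L - T) cs))"
    then obtain A where "A \<in> F" "S = L - (L - A)" using cs(3) by auto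
    moreover have "A \<subseteq> L" using \<open>A \<in> F\<close> assms(1) by blast
    ultimately show "S \<in> F" by (simp add: double_diff)
  qed
  moreover have "is_chain (rev (map (\<lambda>T. L - T) cs))"
    using cs(2,3) by (intro is_chain_rev_map_Diff) auto
  moreover have "length (rev (map (\<lambda>T. L - T) cs)) = k + 1" using cs(1) by simp
  ultimately show False using assms(2) unfolding k_sperner_def by blast
qed

lemma trace_image_Diff:
  assumes "L \<subseteq> U"
  shows "trace ((\<lambda>A. U - A) ` F) L = (\<lambda>T. L - T) ` trace F L"
  unfolding trace_def image_image using assms by (intro image_cong) auto

lemma trace_sperner_image_complement:
  assumes "trace_sperner n m k F"
  shows "trace_sperner n m k ((\<lambda>A. {1..n} - A) ` F)"
  unfolding trace_sperner_def
proof (intro allI impI)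
  fix L assume L: "L \<subseteq> {1..n}" "card L = m"
  have "trace F L \<subseteq> Pow L" unfolding trace_def by auto
  moreover have "k_sperner k (trace F L)" using assms L unfolding trace_sperner_def by blast
  ultimately have "k_sperner k ((\<lambda>T. L - T) ` trace F L)" by (rule k_sperner_image_Diff)
  then show "k_sperner k (trace ((\<lambda>A. {1..n} - A) ` F) L)" using trace_image_Diff[OF L(1)] by simp
qed

lemma card_upper_half_le:
  assumes F: "F \<subseteq> Pow {1..n}" and ts: "trace_sperner n (n - l) l F" and "8 * l \<le> n"
  shows "n * card {A\<in>F. n \<le> 2 * card A} \<le> 4 * l * 2 ^ Suc (2 * l) * 2 ^ n"
proof -
  have "finite F" using F by (rule finite_subset) simp
  have "n * card {A\<in>F. n \<le> 2 * card A} = (\<Sum>A\<in>{A\<in>F. n \<le> 2 * card A}. n)" by simp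
  also have "\<dots> \<le> (\<Sum>A\<in>{A\<in>F. n \<le> 2 * card A}. 4 * (card A - 2 * l))"
    using \<open>8 * l \<le> n\<close> by (intro sum_mono) auto
  also have "\<dots> \<le> 4 * (\<Sum>A\<in>F. card A - 2 * l)"
    unfolding sum_distrib_left using \<open>finite F\<close> by (intro sum_mono2) auto
  also have "\<dots> \<le> 4 * (l * 2 ^ Suc (2 * l) * 2 ^ n)"
    by (intro mult_le_mono2 sum_card_minus_le[OF F ts]) (use \<open>8 * l \<le> n\<close> in linarith)
  finally show ?thesis by (simp only: mult.assoc)
qed

lemma card_trace_sperner_le:
  assumes F: "F \<subseteq> Pow {1..n}" and ts: "trace_sperner n (n - l) l F" and "8 * l \<le> n"
  shows "n * card F \<le> 8 * l * 2 ^ Suc (2 * l) * 2 ^ n"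
proof -
  define c where "c A = {1..n} - A" for A :: "nat set"
  have cF: "c ` F \<subseteq> Pow {1..n}" "trace_sperner n (n - l) l (c ` F)"
    unfolding c_def using trace_sperner_image_complement[OF ts] by auto
  have "finite F" using F by (rule finite_subset) simp
  have inj: "inj_on c {A\<in>F. 2 * card A \<le> n}"
    using F unfolding c_def inj_on_def by blast
  have into_upper: "c ` {A\<in>F. 2 * card A \<le> n} \<subseteq> {B\<in>c ` F. n \<le> 2 * card B}"
  proof
    fix B assume "B \<in> c ` {A\<in>F. 2 * card A \<le> n}"
    then obtain A where A: "A \<in> F" "2 * card A \<le> n" "B = c A" by auto
    have "A \<subseteq> {1..n}" using A(1) F by blast
    then have "card B = n - card A" unfolding A(3) c_def by (simp add: card_Diff_subset finite_subset)
    with A show "B \<in> {B\<in>c ` F. n \<le> 2 * card B}" by auto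
  qed
  have "card {A\<in>F. 2 * card A \<le> n} = card (c ` {A\<in>F. 2 * card A \<le> n})"
    using inj by (simp add: card_image)
  also have "\<dots> \<le> card {B\<in>c ` F. n \<le> 2 * card B}"
    using into_upper \<open>finite F\<close> by (intro card_mono) auto
  finally have lower: "card {A\<in>F. 2 * card A \<le> n} \<le> card {B\<in>c ` F. n \<le> 2 * card B}" .
  have "card F \<le> card {A\<in>F. n \<le> 2 * card A} + card {A\<in>F. 2 * card A \<le> n}"
    by (rule order_trans[OF card_mono card_Un_le]) (use \<open>finite F\<close> in auto)
  then have "n * card F \<le> n * (card {A\<in>F. n \<le> 2 * card A} + card {B\<in>c ` F. n \<le> 2 * card B})"
    using lower by (intro mult_le_mono2) linarith
  also have "\<dots> = n * card {A\<in>F. n \<le> 2 * card A} + n * card {B\<in>c ` F. n \<le> 2 * card B}"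
    by (rule add_mult_distrib2)
  also have "\<dots> \<le> 4 * l * 2 ^ Suc (2 * l) * 2 ^ n + 4 * l * 2 ^ Suc (2 * l) * 2 ^ n"
    by (intro add_mono card_upper_half_le F ts cF \<open>8 * l \<le> n\<close>)
  finally show ?thesis by (simp add: ac_simps)
qed

lemma Suc_times_central_binomial_Suc:
  "Suc m * (2 * Suc m choose Suc m) = 2 * (2 * m + 1) * (2 * m choose m)"
  by (metis Suc_eq_plus1 Suc_times_binomial Suc_times_binomial_add
      add_2_eq_Suc add_mult_distrib mult_Suc_right nat_mult_1 one_add_one)

lemma sixteen_pow_le_central_binomial_sq:
  "1 \<le> m \<Longrightarrow> (16::nat) ^ m \<le> 4 * m * (2 * m choose m) ^ 2"
proof (induction m rule: nat_induct_at_least)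
  case (Suc m)
  define b where "b = 2 * m choose m"
  define b' where "b' = 2 * Suc m choose Suc m"
  have "Suc m * 16 ^ Suc m = 16 * (Suc m * 16 ^ m)" by simp
  also have "\<dots> \<le> 16 * (Suc m * (4 * m * b ^ 2))"
    using Suc.IH unfolding b_def by (intro mult_le_mono2) simp
  also have "\<dots> \<le> 16 * ((2 * m + 1) ^ 2 * b ^ 2)"
    by (intro mult_le_mono2) (simp add: power2_eq_square algebra_simps)
  also have "\<dots> = 4 * (Suc m * b') ^ 2"
    unfolding b_def b'_def Suc_times_central_binomial_Suc by (simp only: power_mult_distrib) simp
  also have "\<dots> = Suc m * (4 * Suc m * b' ^ 2)"
    by (simp only: power2_eq_square ac_simps)
  finally show ?case unfolding b'_def by (simp only: mult_le_cancel1)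
qed simp

lemma two_pow_le_central_binomial:
  assumes "1 \<le> n"
  shows "(2::real) ^ n \<le> 4 * sqrt n * real (n choose (n div 2))"
proof (cases "n = 1")
  case False
  define m where "m = n div 2"
  have n: "n = 2 * m \<or> n = Suc (2 * m)" unfolding m_def by presburger
  with assms False have "1 \<le> m" by auto
  have "real (16 ^ m) \<le> real (4 * m * (2 * m choose m) ^ 2)"
    using sixteen_pow_le_central_binomial_sq[OF \<open>1 \<le> m\<close>] by linarith
  then have "sqrt (4 ^ m * 4 ^ m) \<le> sqrt (4 * real m * real (2 * m choose m) ^ 2)"
    by (simp add: power_mult_distrib[symmetric])
  then have "(4::real) ^ m \<le> 2 * sqrt m * real (2 * m choose m)"
    by (simp add: real_sqrt_mult)
  moreover have "2 * m choose m \<le> n choose (n div 2)"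
    using n \<open>1 \<le> m\<close> unfolding m_def[symmetric] by (cases m) auto
  moreover have "(2::real) ^ n \<le> 2 * 4 ^ m"
    using n by (auto simp: power_mult)
  moreover have "sqrt m \<le> sqrt n" using n by auto
  ultimately have "(2::real) ^ n \<le> 4 * (sqrt m * real (2 * m choose m))" by simp
  also have "\<dots> \<le> 4 * (sqrt n * real (n choose (n div 2)))"
    using \<open>sqrt m \<le> sqrt n\<close> \<open>2 * m choose m \<le> n choose (n div 2)\<close>
    by (intro mult_left_mono mult_mono) auto
  finally show ?thesis by simp
qed simp

lemma card_trace_sperner_le_sqrt:
  assumes F: "F \<subseteq> Pow {1..n}" and ts: "trace_sperner n (n - l) l F"
    and "8 * l \<le> n" and "1 \<le> n"
  shows "real (card F) \<le> 32 * real l * 2 ^ Suc (2 * l) * real (n choose (n div 2)) / sqrt n"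
proof -
  define K :: real where "K = 8 * real l * 2 ^ Suc (2 * l)"
  define B where "B = real (n choose (n div 2))"
  have "0 < sqrt n" using \<open>1 \<le> n\<close> by simp
  have "sqrt n * (sqrt n * card F) = real (n * card F)" by simp
  also have "\<dots> \<le> real (8 * l * 2 ^ Suc (2 * l) * 2 ^ n)"
    using card_trace_sperner_le[OF F ts \<open>8 * l \<le> n\<close>] by (simp only: of_nat_le_iff)
  also have "\<dots> = K * 2 ^ n" unfolding K_def by simp
  also have "\<dots> \<le> K * (4 * sqrt n * B)"
    unfolding B_def K_def using two_pow_le_central_binomial[OF \<open>1 \<le> n\<close>]
    by (intro mult_left_mono) auto
  also have "\<dots> = sqrt n * (4 * K * B)" by simp
  finally have "sqrt n * card F \<le> 4 * K * B"
    using \<open>0 < sqrt n\<close> by (simp only: mult_le_cancel_left_pos)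
  then show ?thesis
    unfolding K_def B_def using \<open>0 < sqrt n\<close> by (simp add: pos_le_divide_eq mult.commute)
qed

lemma card_le_two_pow:
  assumes "F \<subseteq> Pow {1..n}"
  shows "card F \<le> 2 ^ n"
  using card_mono[OF _ assms] by (simp add: card_Pow)

lemma trace_sperner_card_le_sqrt:
  "\<exists>C\<ge>0. \<forall>n F. 1 \<le> n \<longrightarrow> F \<subseteq> Pow {1..n} \<longrightarrow> trace_sperner n (n - l) l F \<longrightarrow>
     real (card F) \<le> C * real (n choose (n div 2)) / sqrt n"
proof (intro exI[of _ "32 * real l * 2 ^ Suc (2 * l) + 2 ^ (8 * l) * sqrt (8 * l)"] conjI allI impI)
  fix n F assume n: "1 \<le> n" and F: "F \<subseteq> Pow {1..n}" and ts: "trace_sperner n (n - l) l F"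
  define B where "B = real (n choose (n div 2))"
  have "0 < n choose (n div 2)" by (simp add: zero_less_binomial_iff)
  then have "1 \<le> B" unfolding B_def by linarith
  have "0 < sqrt n" using n by simp
  have "real (card F) \<le> 32 * real l * 2 ^ Suc (2 * l) * B / sqrt n + 2 ^ (8 * l) * sqrt (8 * l) * B / sqrt n"
  proof (cases "8 * l \<le> n")
    case True
    then have "real (card F) \<le> 32 * real l * 2 ^ Suc (2 * l) * B / sqrt n"
      unfolding B_def by (rule card_trace_sperner_le_sqrt[OF F ts _ n])
    moreover have "0 \<le> 2 ^ (8 * l) * sqrt (8 * l) * B / sqrt n" using \<open>1 \<le> B\<close> by simp
    ultimately show ?thesis by linarith
  next
    case False
    have "card F \<le> (2::nat) ^ (8 * l)"
      using card_le_two_pow[OF F] power_increasing[of n "8 * l" "2::nat"] False by linarith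
    then have "real (card F) \<le> 2 ^ (8 * l)"
      by (metis of_nat_le_iff of_nat_numeral of_nat_power)
    also have "\<dots> \<le> 2 ^ (8 * l) * (sqrt (8 * l) / sqrt n) * B"
    proof -
      have "1 \<le> sqrt (8 * l) / sqrt n" using False \<open>0 < sqrt n\<close> by simp
      then have "1 * 1 \<le> sqrt (8 * l) / sqrt n * B" using \<open>1 \<le> B\<close> by (intro mult_mono) auto
      then have "2 ^ (8 * l) * 1 \<le> 2 ^ (8 * l) * (sqrt (8 * l) / sqrt n * B)"
        by (intro mult_left_mono) auto
      then show ?thesis by (simp only: mult.assoc mult_1_right)
    qed
    also have "\<dots> = 2 ^ (8 * l) * sqrt (8 * l) * B / sqrt n" by simp
    finally show ?thesis
      using \<open>1 \<le> B\<close> \<open>0 < sqrt n\<close> by (simp add: add_increasing)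
  qed
  then show "real (card F) \<le> (32 * real l * 2 ^ Suc (2 * l) + 2 ^ (8 * l) * sqrt (8 * l)) * B / sqrt n"
    by (simp add: add_divide_distrib distrib_right)
qed simp

theorem theorem3p2:
  fixes l' :: nat
  assumes "l' > 0"
  shows "\<exists>C::real. \<forall>n::nat. \<forall>F. n \<ge> 1 \<longrightarrow> F \<subseteq> Pow {1..n} \<longrightarrow>
           trace_sperner n (n - l') l' F \<longrightarrow>
           real (card F) \<le> C * real n powr (-1/3) * real (n choose (n div 2))"
proof -
  obtain C where "C \<ge> 0" and C: "\<And>n F. 1 \<le> n \<Longrightarrow> F \<subseteq> Pow {1..n} \<Longrightarrow>
      trace_sperner n (n - l') l' F \<Longrightarrow> real (card F) \<le> C * real (n choose (n div 2)) / sqrt n"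
    using trace_sperner_card_le_sqrt by blast
  have "C * B / sqrt n \<le> C * real n powr (-1/3) * B" if "1 \<le> n" "0 \<le> B" for n :: nat and B
  proof -
    have "1 / sqrt n = real n powr (-1/2)"
      using that by (simp add: powr_minus_divide powr_half_sqrt)
    also have "\<dots> \<le> real n powr (-1/3)" using that by (intro powr_mono) auto
    finally have "C * B * (1 / sqrt n) \<le> C * B * real n powr (-1/3)"
      using that \<open>C \<ge> 0\<close> by (intro mult_left_mono) auto
    then show ?thesis by (simp add: ac_simps)
  qed
  then show ?thesis using C by (meson of_nat_0_le_iff order_trans)
qed

end
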